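(* Let $\mathcal A$ be a class of spaces and let $X$ be a compactum with a binary normal closed subbase $\mathcal S$ such that the superextension $\lambda X$ is an absolute extensor for all spaces in $\mathcal A$. Then every open $\mathcal S$-convex continuous surjection $f\colon X\to Y$ is $\mathcal A$-soft.
   Context: All spaces are Tychonoff and maps continuous. A space $K$ is an absolute extensor for $Z$ if every continuous map from a closed subset of $Z$ to $K$ extends continuously to $Z$. A map $f\colon X\to Y$ is $\mathcal A$-soft if for any $Z\in\mathcal A$, closed $A\subset Z$ and continuous $k\colon Z\to Y$, $h\colon A\to X$ with $f\circ h=k|A$, there is a continuous $g\colon Z\to X$ extending $h$ with $f\circ g=k$. A family of sets is linked if any two members intersect. The superextension $\lambda X$ is the set of all maximal linked systems of closed subsets of $X$ with the topology generated by the subbase $\{U^+:U\subset X\text{ open}\}$, $U^+=\{\eta\in\lambda X:F\subset U\text{ for some }F\in\eta\}$. A family $\mathcal S$ of closed subsets of $X$ is a closed subbase if every closed set is an intersection of finite unions of members of $\mathcal S$; it is binary if every linked subfamily has nonempty intersection; it is normal if for every disjoint $S_0,S_1\in\mathcal S$ there exist $T_0,T_1\in\mathcal S$ with $S_0\cap T_1=\varnothing=T_0\cap S_1$ and $T_0\cup T_1=X$. For $B\subset X$, $I_{\mathcal S}(B)=\bigcap\{S\in\mathcal S:B\subset S\}$; $B$ is $\mathcal S$-convex if $I_{\mathcal S}(\{x,y\})\subset B$ for all $x,y\in B$; $f$ is $\mathcal S$-convex if all its fibers are $\mathcal S$-convex. *)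

theory Defs
  imports "HOL-Analysis.Analysis"
begin

definition tychonoff_space :: "'a topology \<Rightarrow> bool" where
  "tychonoff_space X \<longleftrightarrow> completely_regular_space X \<and> Hausdorff_space X"

definition linked_family :: "'a set set \<Rightarrow> bool" where
  "linked_family \<F> \<longleftrightarrow> (\<forall>A\<in>\<F>. \<forall>B\<in>\<F>. A \<inter> B \<noteq> {})"

definition max_linked_system :: "'a topology \<Rightarrow> 'a set set \<Rightarrow> bool" where
  "max_linked_system X \<eta> \<longleftrightarrow>
     (\<forall>F\<in>\<eta>. closedin X F) \<and> linked_family \<eta> \<and>
     (\<forall>\<xi>. \<eta> \<subseteq> \<xi> \<and> (\<forall>F\<in>\<xi>. closedin X F) \<and> linked_family \<xi> \<longrightarrow> \<xi> = \<eta>)"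

definition superext_space :: "'a topology \<Rightarrow> 'a set set set" where
  "superext_space X = {\<eta>. max_linked_system X \<eta>}"

definition superext_plus :: "'a topology \<Rightarrow> 'a set \<Rightarrow> 'a set set set" where
  "superext_plus X U = {\<eta> \<in> superext_space X. \<exists>F\<in>\<eta>. F \<subseteq> U}"

definition superextension :: "'a topology \<Rightarrow> 'a set set topology" where
  "superextension X =
     subtopology (topology_generated_by {superext_plus X U | U. openin X U}) (superext_space X)"

definition absolute_extensor_for :: "'k topology \<Rightarrow> 'z topology \<Rightarrow> bool" where
  "absolute_extensor_for K Z \<longleftrightarrow>
     (\<forall>A g. closedin Z A \<and> continuous_map (subtopology Z A) K g \<longrightarrow>
        (\<exists>h. continuous_map Z K h \<and> (\<forall>x\<in>A. h x = g x)))"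

definition soft_map :: "'z topology set \<Rightarrow> 'a topology \<Rightarrow> 'b topology \<Rightarrow> ('a \<Rightarrow> 'b) \<Rightarrow> bool" where
  "soft_map \<A> X Y f \<longleftrightarrow>
     (\<forall>Z\<in>\<A>. \<forall>A k h. closedin Z A \<and> continuous_map Z Y k \<and>
        continuous_map (subtopology Z A) X h \<and> (\<forall>a\<in>A. f (h a) = k a) \<longrightarrow>
        (\<exists>g. continuous_map Z X g \<and> (\<forall>a\<in>A. g a = h a) \<and>
             (\<forall>z\<in>topspace Z. f (g z) = k z)))"

definition closed_subbase :: "'a topology \<Rightarrow> 'a set set \<Rightarrow> bool" where
  "closed_subbase X \<S> \<longleftrightarrow>
     (\<forall>S\<in>\<S>. closedin X S) \<and>
     (\<forall>C. closedin X C \<longrightarrow>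
        (\<exists>\<B>. (\<forall>B\<in>\<B>. \<exists>\<T>. finite \<T> \<and> \<T> \<subseteq> \<S> \<and> B = \<Union>\<T>) \<and>
              C = topspace X \<inter> \<Inter>\<B>))"

definition binary_family :: "'a topology \<Rightarrow> 'a set set \<Rightarrow> bool" where
  "binary_family X \<S> \<longleftrightarrow>
     (\<forall>\<L>. \<L> \<subseteq> \<S> \<and> linked_family \<L> \<longrightarrow> topspace X \<inter> \<Inter>\<L> \<noteq> {})"

definition normal_family :: "'a topology \<Rightarrow> 'a set set \<Rightarrow> bool" where
  "normal_family X \<S> \<longleftrightarrow>
     (\<forall>S0\<in>\<S>. \<forall>S1\<in>\<S>. S0 \<inter> S1 = {} \<longrightarrow>
        (\<exists>T0\<in>\<S>. \<exists>T1\<in>\<S>. S0 \<inter> T1 = {} \<and> T0 \<inter> S1 = {} \<and> T0 \<union> T1 = topspace X))"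

definition S_hull :: "'a topology \<Rightarrow> 'a set set \<Rightarrow> 'a set \<Rightarrow> 'a set" where
  "S_hull X \<S> B = topspace X \<inter> \<Inter>{S\<in>\<S>. B \<subseteq> S}"

definition S_convex :: "'a topology \<Rightarrow> 'a set set \<Rightarrow> 'a set \<Rightarrow> bool" where
  "S_convex X \<S> B \<longleftrightarrow> (\<forall>x\<in>B. \<forall>y\<in>B. S_hull X \<S> {x, y} \<subseteq> B)"

definition S_convex_map :: "'a topology \<Rightarrow> 'a set set \<Rightarrow> 'b topology \<Rightarrow> ('a \<Rightarrow> 'b) \<Rightarrow> bool" where
  "S_convex_map X \<S> Y f \<longleftrightarrow>
     (\<forall>y\<in>topspace Y. S_convex X \<S> {x\<in>topspace X. f x = y})"

end

theory Submission
  imports Defs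
begin

text \<open>For \<open>y \<in> Y\<close> and \<open>\<eta> \<in> \<lambda>X\<close>, the members of \<open>\<S>\<close> that meet the fibre \<open>f\<^sup>-\<^sup>1(y)\<close> and
  contain a member of \<open>\<eta>\<close> are linked. The fibre is closed and \<open>\<S>\<close>-convex, so binarity and
  compactness give a Helly-type theorem: these sets have a common point in the fibre, and
  normality of \<open>\<S>\<close> makes it unique. The resulting point \<open>r(y, \<eta>)\<close> satisfies
  \<open>f (r(y, \<eta>)) = y\<close> and \<open>r(f x, \<eta>\<^sub>x) = x\<close> for the principal system \<open>\<eta>\<^sub>x\<close> of \<open>x\<close>, and
  openness of \<open>f\<close> makes \<open>z \<mapsto> r(k z, G z)\<close> continuous whenever \<open>k\<close> and \<open>G\<close> are.
  Given a partial lift \<open>h\<close> of \<open>k: Z \<rightarrow> Y\<close>, extend \<open>z \<mapsto> \<eta>\<^bsub>h z\<^esub>\<close> to \<open>G: Z \<rightarrow> \<lambda>X\<close>, which is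
  possible as \<open>\<lambda>X\<close> is an absolute extensor for \<open>Z\<close>; then \<open>z \<mapsto> r(k z, G z)\<close> is the required lift.\<close>

section \<open>Maximal linked systems\<close>

lemma max_linked_system_closedin: "max_linked_system X \<eta> \<Longrightarrow> F \<in> \<eta> \<Longrightarrow> closedin X F"
  unfolding max_linked_system_def by blast

lemma max_linked_system_linked:
  "max_linked_system X \<eta> \<Longrightarrow> F \<in> \<eta> \<Longrightarrow> G \<in> \<eta> \<Longrightarrow> F \<inter> G \<noteq> {}"
  unfolding max_linked_system_def linked_family_def by blast

lemma max_linked_system_nonempty:
  assumes "topspace X \<noteq> {}" "max_linked_system X \<eta>"
  shows "\<eta> \<noteq> {}"
proof
  assume "\<eta> = {}"
  moreover have "linked_family {topspace X}"
    using assms(1) unfolding linked_family_def by auto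
  ultimately have "{topspace X} = \<eta>"
    using assms(2) unfolding max_linked_system_def by (metis closedin_topspace empty_subsetI singletonD)
  with \<open>\<eta> = {}\<close> show False by auto
qed

lemma max_linked_system_mem_if_meets_all:
  assumes "topspace X \<noteq> {}" "max_linked_system X \<eta>" "closedin X T" "\<forall>F\<in>\<eta>. F \<inter> T \<noteq> {}"
  shows "T \<in> \<eta>"
proof -
  have "T \<noteq> {}"
    using assms(4) max_linked_system_nonempty[OF assms(1,2)] by auto
  then have "linked_family (insert T \<eta>)"
    using assms(2,4) unfolding linked_family_def max_linked_system_def by (auto simp: Int_commute)
  moreover have "\<forall>F\<in>insert T \<eta>. closedin X F"
    using assms(2,3) unfolding max_linked_system_def by auto
  ultimately have "insert T \<eta> = \<eta>"
    using assms(2) unfolding max_linked_system_def by blast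
  then show ?thesis by auto
qed

lemma max_linked_system_cover:
  assumes "topspace X \<noteq> {}" "max_linked_system X \<eta>" "closedin X T0" "T0 \<union> T1 = topspace X"
  shows "T0 \<in> \<eta> \<or> (\<exists>F\<in>\<eta>. F \<subseteq> T1)"
proof (cases "\<forall>F\<in>\<eta>. F \<inter> T0 \<noteq> {}")
  case True
  then show ?thesis using max_linked_system_mem_if_meets_all[OF assms(1-3)] by auto
next
  case False
  then obtain F where "F \<in> \<eta>" "F \<inter> T0 = {}" by auto
  moreover have "F \<subseteq> topspace X"
    using max_linked_system_closedin[OF assms(2) \<open>F \<in> \<eta>\<close>] closedin_subset by auto
  ultimately show ?thesis using assms(4) by blast
qed

lemma superextension_topspace_subset: "topspace (superextension X) \<subseteq> superext_space X"
  unfolding superextension_def by simp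

lemma openin_superextension_plus:
  assumes "openin X U"
  shows "openin (superextension X) (superext_plus X U)"
  unfolding superextension_def openin_subtopology
proof (intro exI conjI)
  show "openin (topology_generated_by {superext_plus X U |U. openin X U}) (superext_plus X U)"
    using assms by (intro topology_generated_by_Basis) blast
  show "superext_plus X U = superext_plus X U \<inter> superext_space X"
    unfolding superext_plus_def by blast
qed

definition principal_linked_system :: "'a topology \<Rightarrow> 'a \<Rightarrow> 'a set set" where
  "principal_linked_system X x = {F. closedin X F \<and> x \<in> F}"

lemma max_linked_system_principal:
  assumes "t1_space X" "x \<in> topspace X"
  shows "max_linked_system X (principal_linked_system X x)"
proof -
  have "\<xi> \<subseteq> principal_linked_system X x"
    if "principal_linked_system X x \<subseteq> \<xi>" "\<forall>F\<in>\<xi>. closedin X F" "linked_family \<xi>" for \<xi>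
  proof
    fix F assume "F \<in> \<xi>"
    have "{x} \<in> \<xi>"
      using that(1) closedin_t1_singleton[OF assms] unfolding principal_linked_system_def by blast
    then have "x \<in> F"
      using that(3) \<open>F \<in> \<xi>\<close> unfolding linked_family_def by blast
    then show "F \<in> principal_linked_system X x"
      using that(2) \<open>F \<in> \<xi>\<close> unfolding principal_linked_system_def by blast
  qed
  moreover have "linked_family (principal_linked_system X x)"
    unfolding linked_family_def principal_linked_system_def by auto
  moreover have "\<forall>F\<in>principal_linked_system X x. closedin X F"
    unfolding principal_linked_system_def by auto
  ultimately show ?thesis
    unfolding max_linked_system_def by blast
qed

lemma continuous_map_principal_linked_system:
  assumes "t1_space X"
  shows "continuous_map X (superextension X) (principal_linked_system X)"
  unfolding superextension_def continuous_map_in_subtopology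
proof (intro conjI)
  show "principal_linked_system X \<in> topspace X \<rightarrow> superext_space X"
    using max_linked_system_principal[OF assms] unfolding superext_space_def by auto
  show "continuous_map X (topology_generated_by {superext_plus X U |U. openin X U})
          (principal_linked_system X)"
  proof (rule continuous_on_generated_topo)
    fix W assume "W \<in> {superext_plus X U |U. openin X U}"
    then obtain U where U: "openin X U" "W = superext_plus X U" by blast
    have "principal_linked_system X -` W \<inter> topspace X = U"
    proof
      show "principal_linked_system X -` W \<inter> topspace X \<subseteq> U"
        unfolding U(2) superext_plus_def principal_linked_system_def by auto
      show "U \<subseteq> principal_linked_system X -` W \<inter> topspace X"
      proof
        fix x assume "x \<in> U"
        then have x: "x \<in> topspace X" using openin_subset U(1) by blast
        have "{x} \<in> principal_linked_system X x"
          using closedin_t1_singleton[OF assms x] unfolding principal_linked_system_def by auto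
        then show "x \<in> principal_linked_system X -` W \<inter> topspace X"
          using max_linked_system_principal[OF assms x] \<open>x \<in> U\<close> x
          unfolding U(2) superext_plus_def superext_space_def by auto
      qed
    qed
    then show "openin X (principal_linked_system X -` W \<inter> topspace X)" using U(1) by simp
  next
    have "principal_linked_system X x \<in> superext_plus X (topspace X)" if "x \<in> topspace X" for x
      using max_linked_system_principal[OF assms that] that
      unfolding superext_plus_def superext_space_def principal_linked_system_def by auto
    then show "principal_linked_system X ` topspace X \<subseteq> \<Union> {superext_plus X U |U. openin X U}"
      by blast
  qed
qed

section \<open>Binary normal subbases and Helly-type intersections\<close>

lemma closed_subbase_closedin: "closed_subbase X \<S> \<Longrightarrow> S \<in> \<S> \<Longrightarrow> closedin X S"
  unfolding closed_subbase_def by blast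

lemma binary_family_topspace_nonempty: "binary_family X \<S> \<Longrightarrow> topspace X \<noteq> {}"
  unfolding binary_family_def using linked_family_def[of "{}"] by auto

lemma closed_subbase_separates_points:
  assumes "closed_subbase X \<S>" "t1_space X" "a \<in> topspace X" "b \<in> topspace X" "a \<noteq> b"
  shows "\<exists>S\<in>\<S>. a \<in> S \<and> b \<notin> S"
proof -
  obtain \<B> where \<B>: "\<forall>B\<in>\<B>. \<exists>\<T>. finite \<T> \<and> \<T> \<subseteq> \<S> \<and> B = \<Union>\<T>" "{a} = topspace X \<inter> \<Inter>\<B>"
    using assms(1) closedin_t1_singleton[OF assms(2,3)] unfolding closed_subbase_def by meson
  then have "b \<notin> topspace X \<inter> \<Inter>\<B>" using assms(5) by auto
  then obtain B where "B \<in> \<B>" "b \<notin> B" "a \<in> B"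
    using assms(4) \<B>(2) by blast
  moreover obtain \<T> where "\<T> \<subseteq> \<S>" "B = \<Union>\<T>" using \<B>(1) \<open>B \<in> \<B>\<close> by blast
  ultimately show ?thesis by blast
qed

lemma binary_subbase_separates_point_from_member:
  assumes "closed_subbase X \<S>" "t1_space X" "binary_family X \<S>"
    and "S \<in> \<S>" "S \<noteq> {}" "b \<in> topspace X" "b \<notin> S"
  shows "\<exists>R\<in>\<S>. b \<in> R \<and> R \<inter> S = {}"
proof (rule ccontr)
  assume "\<not> ?thesis"
  then have "\<And>R. R \<in> \<S> \<Longrightarrow> b \<in> R \<Longrightarrow> R \<inter> S \<noteq> {} \<and> S \<inter> R \<noteq> {}"
    by blast
  then have "linked_family (insert S {R\<in>\<S>. b \<in> R})"
    using \<open>S \<noteq> {}\<close> unfolding linked_family_def by auto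
  moreover have "insert S {R\<in>\<S>. b \<in> R} \<subseteq> \<S>" using assms(4) by auto
  ultimately have "topspace X \<inter> \<Inter>(insert S {R\<in>\<S>. b \<in> R}) \<noteq> {}"
    using assms(3) unfolding binary_family_def by blast
  then obtain x where x: "x \<in> topspace X" "x \<in> S" "\<And>R. R \<in> \<S> \<Longrightarrow> b \<in> R \<Longrightarrow> x \<in> R"
    by blast
  have "x = b"
  proof (rule ccontr)
    assume "x \<noteq> b"
    then obtain R where "R \<in> \<S>" "b \<in> R" "x \<notin> R"
      using closed_subbase_separates_points[OF assms(1,2,6) x(1)] by metis
    with x(3) show False by blast
  qed
  with x(2) assms(7) show False by simp
qed

lemma normal_subbase_separating_cover:
  assumes "closed_subbase X \<S>" "t1_space X" "binary_family X \<S>" "normal_family X \<S>"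
    and "S \<in> \<S>" "S \<noteq> {}" "b \<in> topspace X" "b \<notin> S"
  shows "\<exists>T0\<in>\<S>. \<exists>T1\<in>\<S>. S \<inter> T1 = {} \<and> b \<notin> T0 \<and> T0 \<union> T1 = topspace X"
proof -
  obtain R where R: "R \<in> \<S>" "b \<in> R" "S \<inter> R = {}"
    using binary_subbase_separates_point_from_member[OF assms(1-3,5-8)] by blast
  then obtain T0 T1 where "T0 \<in> \<S>" "T1 \<in> \<S>" "S \<inter> T1 = {}" "T0 \<inter> R = {}" "T0 \<union> T1 = topspace X"
    using assms(4)[unfolded normal_family_def, rule_format, OF assms(5) R(1)] by blast
  with R(2) show ?thesis by blast
qed

lemma S_convex_Int_member:
  assumes "S_convex X \<S> C" "S \<in> \<S>"
  shows "S_convex X \<S> (C \<inter> S)"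
  using assms unfolding S_convex_def S_hull_def by auto

lemma binary_subbase_S_convex_meets_Int:
  assumes "binary_family X \<S>" "S_convex X \<S> C" "S1 \<in> \<S>" "S2 \<in> \<S>" "S1 \<inter> S2 \<noteq> {}"
    and "c1 \<in> C \<inter> S1" "c2 \<in> C \<inter> S2"
  shows "C \<inter> S1 \<inter> S2 \<noteq> {}"
proof -
  let ?\<L> = "{S1, S2} \<union> {S\<in>\<S>. {c1, c2} \<subseteq> S}"
  have member_cases: "(A = S1 \<or> A = S2) \<or> (c1 \<in> A \<and> c2 \<in> A)" if "A \<in> ?\<L>" for A
    using that by blast
  have "linked_family ?\<L>"
    unfolding linked_family_def
  proof (intro ballI)
    fix A B assume "A \<in> ?\<L>" "B \<in> ?\<L>"
    from member_cases[OF this(1)] member_cases[OF this(2)] assms(5-7) show "A \<inter> B \<noteq> {}"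
      by (elim disjE conjE) auto
  qed
  moreover have "?\<L> \<subseteq> \<S>" using assms(3,4) by auto
  ultimately obtain x where x: "x \<in> topspace X \<inter> \<Inter>?\<L>"
    using assms(1) unfolding binary_family_def by blast
  then have "x \<in> S_hull X \<S> {c1, c2}" unfolding S_hull_def by auto
  then have "x \<in> C" using assms(2,6,7) unfolding S_convex_def by blast
  with x show ?thesis by auto
qed

lemma binary_subbase_S_convex_Helly_finite:
  assumes "binary_family X \<S>" "finite \<F>" "\<F> \<subseteq> \<S>" "linked_family \<F>"
    and "S_convex X \<S> C" "C \<noteq> {}" "\<forall>S\<in>\<F>. S \<inter> C \<noteq> {}"
  shows "C \<inter> \<Inter>\<F> \<noteq> {}"
  using assms(2-7)
proof (induction \<F> arbitrary: C rule: finite_induct)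
  case empty
  then show ?case by simp
next
  case (insert S \<F>)
  have "S' \<inter> (C \<inter> S) \<noteq> {}" if "S' \<in> \<F>" for S'
  proof -
    have "S \<inter> C \<noteq> {}" "S' \<inter> C \<noteq> {}"
      using insert.prems(5) that by simp_all
    then obtain c1 c2 where c: "c1 \<in> C \<inter> S" "c2 \<in> C \<inter> S'"
      by (metis Int_commute ex_in_conv)
    have "S \<in> \<S>" "S' \<in> \<S>"
      using insert.prems(1) that by auto
    moreover have "S \<inter> S' \<noteq> {}"
      using insert.prems(2) that unfolding linked_family_def by simp
    ultimately have "C \<inter> S \<inter> S' \<noteq> {}"
      using binary_subbase_S_convex_meets_Int[OF assms(1) insert.prems(3) _ _ _ c] by blast
    then show ?thesis by auto
  qed
  moreover have "linked_family \<F>"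
    using insert.prems(2) unfolding linked_family_def by simp
  moreover have "C \<inter> S \<noteq> {}"
    using insert.prems(5) by blast
  moreover have "S_convex X \<S> (C \<inter> S)"
    using S_convex_Int_member[OF insert.prems(3)] insert.prems(1) by blast
  ultimately have "(C \<inter> S) \<inter> \<Inter>\<F> \<noteq> {}"
    using insert.IH[of "C \<inter> S"] insert.prems(1) by blast
  then show ?case by auto
qed

lemma binary_subbase_S_convex_Helly:
  assumes "compact_space X" "closed_subbase X \<S>" "binary_family X \<S>"
    and "\<M> \<subseteq> \<S>" "linked_family \<M>" "S_convex X \<S> C" "closedin X C" "C \<noteq> {}"
    and "\<forall>S\<in>\<M>. S \<inter> C \<noteq> {}"
  shows "C \<inter> \<Inter>\<M> \<noteq> {}"
proof -
  have "C \<inter> \<Inter>\<F> \<noteq> {}" if "finite \<F>" "\<F> \<subseteq> \<M>" for \<F>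
  proof -
    have "linked_family \<F>"
      using assms(5) that(2) unfolding linked_family_def by auto
    moreover have "\<F> \<subseteq> \<S>" "\<forall>S\<in>\<F>. S \<inter> C \<noteq> {}"
      using that(2) assms(4,9) by auto
    ultimately show ?thesis
      using binary_subbase_S_convex_Helly_finite[OF assms(3) that(1)] assms(6,8) by blast
  qed
  moreover have "\<forall>S\<in>\<M>. closedin X S"
    using assms(2,4) closed_subbase_closedin by blast
  ultimately show ?thesis
    using closedin_compact_space[OF assms(1,7)] unfolding compactin_fip by blast
qed

lemma continuous_map_closed_subbase:
  assumes "closed_subbase X \<S>" "\<And>z. z \<in> topspace Z \<Longrightarrow> g z \<in> topspace X"
    and "\<And>S. S \<in> \<S> \<Longrightarrow> closedin Z {z \<in> topspace Z. g z \<in> S}"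
  shows "continuous_map Z X g"
proof -
  have "closedin Z {z \<in> topspace Z. g z \<in> C}" if C: "closedin X C" for C
  proof -
    obtain \<B> where \<B>: "\<forall>B\<in>\<B>. \<exists>\<T>. finite \<T> \<and> \<T> \<subseteq> \<S> \<and> B = \<Union>\<T>" "C = topspace X \<inter> \<Inter>\<B>"
      using assms(1)[unfolded closed_subbase_def, THEN conjunct2, rule_format, OF C] by (elim exE conjE)
    have closed_B: "closedin Z {z \<in> topspace Z. g z \<in> B}" if B: "B \<in> \<B>" for B
    proof -
      obtain \<T> where \<T>: "finite \<T>" "\<T> \<subseteq> \<S>" "B = \<Union>\<T>"
        using bspec[OF \<B>(1) B] by (elim exE conjE)
      then have "{z \<in> topspace Z. g z \<in> B} = \<Union>((\<lambda>S. {z \<in> topspace Z. g z \<in> S}) ` \<T>)"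
        by auto
      moreover have "closedin Z (\<Union>((\<lambda>S. {z \<in> topspace Z. g z \<in> S}) ` \<T>))"
        using \<T>(1,2) assms(3) by (intro closedin_Union) auto
      ultimately show ?thesis by simp
    qed
    have "{z \<in> topspace Z. g z \<in> C} =
        \<Inter>(insert (topspace Z) ((\<lambda>B. {z \<in> topspace Z. g z \<in> B}) ` \<B>))"
      using \<B>(2) assms(2) by auto
    moreover have "closedin Z (\<Inter>(insert (topspace Z) ((\<lambda>B. {z \<in> topspace Z. g z \<in> B}) ` \<B>)))"
      using closed_B by (intro closedin_Inter) auto
    ultimately show ?thesis by simp
  qed
  then show ?thesis
    unfolding continuous_map_closedin using assms(2) by auto
qed

section \<open>Selecting points in fibres\<close>

locale S_convex_open_surjection =
  fixes X :: "'a topology" and \<S> :: "'a set set" and Y :: "'b topology" and f :: "'a \<Rightarrow> 'b"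
  assumes compact: "compact_space X" and t1: "t1_space X"
    and subbase: "closed_subbase X \<S>" and binary: "binary_family X \<S>" and normal: "normal_family X \<S>"
    and Hausdorff_Y: "Hausdorff_space Y"
    and continuous: "continuous_map X Y f" and open_map: "open_map X Y f"
    and surj: "f ` topspace X = topspace Y" and convex: "S_convex_map X \<S> Y f"
begin

definition fibre :: "'b \<Rightarrow> 'a set" where
  "fibre y = {x \<in> topspace X. f x = y}"

definition fibre_subbase :: "'b \<Rightarrow> 'a set set \<Rightarrow> 'a set set" where
  "fibre_subbase y \<eta> = {S\<in>\<S>. S \<inter> fibre y \<noteq> {} \<and> (\<exists>F\<in>\<eta>. F \<subseteq> S)}"

definition fibre_point :: "'b \<Rightarrow> 'a set set \<Rightarrow> 'a" where
  "fibre_point y \<eta> = (THE x. x \<in> fibre y \<and> (\<forall>S\<in>fibre_subbase y \<eta>. x \<in> S))"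

lemma fibre_closedin: "y \<in> topspace Y \<Longrightarrow> closedin X (fibre y)"
  using closedin_continuous_map_preimage[OF continuous closedin_t1_singleton]
    Hausdorff_imp_t1_space[OF Hausdorff_Y]
  unfolding fibre_def by auto

lemma fibre_nonempty: "y \<in> topspace Y \<Longrightarrow> fibre y \<noteq> {}"
  using surj unfolding fibre_def by (metis (mono_tags, lifting) empty_iff image_iff mem_Collect_eq)

lemma fibre_S_convex: "y \<in> topspace Y \<Longrightarrow> S_convex X \<S> (fibre y)"
  using convex unfolding S_convex_map_def fibre_def by blast

lemma linked_fibre_subbase: "max_linked_system X \<eta> \<Longrightarrow> linked_family (fibre_subbase y \<eta>)"
  unfolding linked_family_def fibre_subbase_def
  using max_linked_system_linked by blast

lemma fibre_point_exists:
  assumes "y \<in> topspace Y" "max_linked_system X \<eta>"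
  shows "\<exists>x. x \<in> fibre y \<and> (\<forall>S\<in>fibre_subbase y \<eta>. x \<in> S)"
proof -
  have "fibre y \<inter> \<Inter>(fibre_subbase y \<eta>) \<noteq> {}"
    using binary_subbase_S_convex_Helly[OF compact subbase binary _ linked_fibre_subbase[OF assms(2)]
        fibre_S_convex fibre_closedin fibre_nonempty] assms(1)
    unfolding fibre_subbase_def by blast
  then show ?thesis by blast
qed

lemma fibre_point_unique:
  assumes "max_linked_system X \<eta>"
    and a: "a \<in> fibre y" "\<forall>S\<in>fibre_subbase y \<eta>. a \<in> S"
    and b: "b \<in> fibre y" "\<forall>S\<in>fibre_subbase y \<eta>. b \<in> S"
  shows "a = b"
proof (rule ccontr)
  assume "a \<noteq> b"
  have "a \<in> topspace X" "b \<in> topspace X" using a(1) b(1) unfolding fibre_def by auto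
  then obtain S where S: "S \<in> \<S>" "a \<in> S" "b \<notin> S"
    using closed_subbase_separates_points[OF subbase t1] \<open>a \<noteq> b\<close> by blast
  then obtain T0 T1 where T: "T0 \<in> \<S>" "T1 \<in> \<S>" "S \<inter> T1 = {}" "b \<notin> T0" "T0 \<union> T1 = topspace X"
    using normal_subbase_separating_cover[OF subbase t1 binary normal] \<open>b \<in> topspace X\<close> by blast
  have "a \<in> T0" "b \<in> T1"
    using T(3-5) S(2) \<open>a \<in> topspace X\<close> \<open>b \<in> topspace X\<close> by blast+
  have "T0 \<in> \<eta> \<or> (\<exists>F\<in>\<eta>. F \<subseteq> T1)"
    using max_linked_system_cover[OF binary_family_topspace_nonempty[OF binary] assms(1)
        closed_subbase_closedin[OF subbase T(1)] T(5)] .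
  then show False
  proof
    assume "T0 \<in> \<eta>"
    then have "T0 \<in> fibre_subbase y \<eta>"
      using T(1) \<open>a \<in> T0\<close> a(1) unfolding fibre_subbase_def by blast
    then show False using b(2) T(4) by blast
  next
    assume "\<exists>F\<in>\<eta>. F \<subseteq> T1"
    then have "T1 \<in> fibre_subbase y \<eta>"
      using T(2) \<open>b \<in> T1\<close> b(1) unfolding fibre_subbase_def by blast
    then show False using a(2) T(3) S(2) by blast
  qed
qed

lemma fibre_point:
  assumes "y \<in> topspace Y" "max_linked_system X \<eta>"
  shows "fibre_point y \<eta> \<in> fibre y" "\<forall>S\<in>fibre_subbase y \<eta>. fibre_point y \<eta> \<in> S"
proof -
  have "\<exists>!x. x \<in> fibre y \<and> (\<forall>S\<in>fibre_subbase y \<eta>. x \<in> S)"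
    using fibre_point_exists[OF assms] fibre_point_unique[OF assms(2)] by blast
  from theI'[OF this] show "fibre_point y \<eta> \<in> fibre y" "\<forall>S\<in>fibre_subbase y \<eta>. fibre_point y \<eta> \<in> S"
    unfolding fibre_point_def by blast+
qed

lemma fibre_point_eqI:
  assumes "y \<in> topspace Y" "max_linked_system X \<eta>"
    and "x \<in> fibre y" "\<forall>S\<in>fibre_subbase y \<eta>. x \<in> S"
  shows "fibre_point y \<eta> = x"
  using fibre_point[OF assms(1,2)] fibre_point_unique[OF assms(2)] assms(3,4) by blast

lemma fibre_point_principal:
  assumes "x \<in> topspace X"
  shows "fibre_point (f x) (principal_linked_system X x) = x"
proof (rule fibre_point_eqI)
  show "f x \<in> topspace Y" using surj assms by blast
  show "max_linked_system X (principal_linked_system X x)"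
    using max_linked_system_principal[OF t1 assms] .
  show "x \<in> fibre (f x)" using assms unfolding fibre_def by auto
  show "\<forall>S\<in>fibre_subbase (f x) (principal_linked_system X x). x \<in> S"
    unfolding fibre_subbase_def principal_linked_system_def by auto
qed


lemma fibre_point_mem_subbase:
  assumes "y \<in> topspace Y" "max_linked_system X \<eta>"
    and "T \<in> \<S>" "T \<inter> fibre y \<noteq> {}" "F \<in> \<eta>" "F \<subseteq> T"
  shows "fibre_point y \<eta> \<in> T"
proof -
  have "T \<in> fibre_subbase y \<eta>"
    using assms(3-6) unfolding fibre_subbase_def by blast
  then show ?thesis using fibre_point(2)[OF assms(1,2)] by blast
qed

lemma disjoint_member_if_fibre_point_not_mem:
  assumes "y \<in> topspace Y" "max_linked_system X \<eta>"
    and "T \<in> \<S>" "T \<inter> fibre y \<noteq> {}" "fibre_point y \<eta> \<notin> T"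
  obtains F where "F \<in> \<eta>" "F \<inter> T = {}"
proof -
  have "T \<notin> \<eta>"
    using fibre_point_mem_subbase[OF assms(1-4)] assms(5) by blast
  then show ?thesis
    using that max_linked_system_mem_if_meets_all[OF binary_family_topspace_nonempty[OF binary]
        assms(2) closed_subbase_closedin[OF subbase assms(3)]] by blast
qed

context
  fixes Z :: "'z topology" and k :: "'z \<Rightarrow> 'b" and G :: "'z \<Rightarrow> 'a set set"
  assumes continuous_k: "continuous_map Z Y k"
    and continuous_G: "continuous_map Z (superextension X) G"
begin

lemma k_in_topspace: "z \<in> topspace Z \<Longrightarrow> k z \<in> topspace Y"
  using continuous_k continuous_map_image_subset_topspace by blast

lemma max_linked_system_G: "z \<in> topspace Z \<Longrightarrow> max_linked_system X (G z)"
  using continuous_G continuous_map_image_subset_topspace superextension_topspace_subset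
  unfolding superext_space_def by blast

lemma fibre_point_along:
  assumes "z \<in> topspace Z"
  shows "fibre_point (k z) (G z) \<in> fibre (k z)"
    "\<forall>S\<in>fibre_subbase (k z) (G z). fibre_point (k z) (G z) \<in> S"
  using fibre_point[OF k_in_topspace max_linked_system_G] assms by auto

lemma neighbourhood_avoiding_disjoint_fibre:
  assumes "S \<in> \<S>" "z0 \<in> topspace Z" "fibre (k z0) \<inter> S = {}"
  shows "\<exists>W. openin Z W \<and> z0 \<in> W \<and> (\<forall>z\<in>W. fibre_point (k z) (G z) \<notin> S)"
proof -
  have "closedin X S" using closed_subbase_closedin[OF subbase assms(1)] .
  then have "closedin Y (f ` S)"
    using compactin_imp_closedin[OF Hausdorff_Y]
      image_compactin[OF closedin_compact_space[OF compact] continuous] by blast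
  then have "openin Y (topspace Y - f ` S)" by blast
  then have "openin Z {z \<in> topspace Z. k z \<in> topspace Y - f ` S}"
    by (rule openin_continuous_map_preimage[OF continuous_k])
  moreover have "k z0 \<notin> f ` S"
  proof
    assume "k z0 \<in> f ` S"
    then obtain s where "s \<in> S" "k z0 = f s" by (rule imageE)
    then have "s \<in> fibre (k z0)"
      using closedin_subset[OF \<open>closedin X S\<close>] unfolding fibre_def by auto
    with \<open>s \<in> S\<close> assms(3) show False by auto
  qed
  moreover have "fibre_point (k z) (G z) \<notin> S" if "z \<in> topspace Z" "k z \<notin> f ` S" for z
  proof
    assume "fibre_point (k z) (G z) \<in> S"
    moreover have "f (fibre_point (k z) (G z)) = k z"
      using fibre_point_along(1)[OF that(1)] unfolding fibre_def by blast
    ultimately show False using that(2) by (metis image_eqI)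
  qed
  ultimately show ?thesis
    using assms(2) k_in_topspace[OF assms(2)]
    by (intro exI[of _ "{z \<in> topspace Z. k z \<in> topspace Y - f ` S}"]) auto
qed

text \<open>Openness of \<open>f\<close> is used here: nearby \<open>k z\<close> still have fibres meeting \<open>X - T0 \<subseteq> T1\<close>.\<close>
lemma neighbourhood_inside_cover_member:
  assumes "T0 \<in> \<S>" "T1 \<in> \<S>" "T0 \<union> T1 = topspace X" "z0 \<in> topspace Z"
    and "fibre_point (k z0) (G z0) \<notin> T0" "T0 \<inter> fibre (k z0) \<noteq> {}"
  shows "\<exists>W. openin Z W \<and> z0 \<in> W \<and> (\<forall>z\<in>W. fibre_point (k z) (G z) \<in> T1)"
proof -
  define U where "U = topspace X - T0"
  have "openin X U" "U \<subseteq> T1"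
    using closed_subbase_closedin[OF subbase assms(1)] assms(3) unfolding U_def by auto
  obtain F where F: "F \<in> G z0" "F \<inter> T0 = {}"
    using disjoint_member_if_fibre_point_not_mem[OF k_in_topspace max_linked_system_G assms(1,6,5)]
      assms(4) by blast
  then have "F \<subseteq> U"
    using max_linked_system_closedin[OF max_linked_system_G[OF assms(4)]] closedin_subset
    unfolding U_def by blast
  define W where "W = {z \<in> topspace Z. k z \<in> f ` U} \<inter> {z \<in> topspace Z. G z \<in> superext_plus X U}"
  have "openin Z W"
    unfolding W_def using \<open>openin X U\<close> open_map openin_superextension_plus
    by (intro openin_Int openin_continuous_map_preimage[OF continuous_k]
        openin_continuous_map_preimage[OF continuous_G]) (auto simp: open_map_def)
  moreover have "z0 \<in> W"
  proof -
    have "fibre_point (k z0) (G z0) \<in> U" "f (fibre_point (k z0) (G z0)) = k z0"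
      using fibre_point_along(1)[OF assms(4)] assms(5) unfolding U_def fibre_def by auto
    then have "k z0 \<in> f ` U" by (metis image_eqI)
    then show ?thesis
      using max_linked_system_G[OF assms(4)] F(1) \<open>F \<subseteq> U\<close> assms(4)
      unfolding W_def superext_plus_def superext_space_def by auto
  qed
  moreover have "fibre_point (k z) (G z) \<in> T1" if z: "z \<in> W" for z
  proof -
    obtain u F' where "u \<in> U" "f u = k z" "F' \<in> G z" "F' \<subseteq> U" "z \<in> topspace Z"
      using z unfolding W_def superext_plus_def by auto
    moreover have "u \<in> fibre (k z)"
      using \<open>u \<in> U\<close> \<open>f u = k z\<close> unfolding U_def fibre_def by auto
    ultimately show ?thesis
      using fibre_point_mem_subbase[OF k_in_topspace max_linked_system_G assms(2)] \<open>U \<subseteq> T1\<close>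
      by blast
  qed
  ultimately show ?thesis by blast
qed

lemma closedin_preimage_fibre_point:
  assumes "S \<in> \<S>"
  shows "closedin Z {z \<in> topspace Z. fibre_point (k z) (G z) \<in> S}"
proof (cases "S = {}")
  case True
  then show ?thesis by simp
next
  case False
  have avoid: "\<exists>W. openin Z W \<and> z0 \<in> W \<and> (\<forall>z\<in>W. fibre_point (k z) (G z) \<notin> S)"
    if z0: "z0 \<in> topspace Z" "fibre_point (k z0) (G z0) \<notin> S" for z0
  proof -
    have "fibre_point (k z0) (G z0) \<in> topspace X"
      using fibre_point_along(1)[OF z0(1)] unfolding fibre_def by auto
    then obtain T0 T1 where T: "T0 \<in> \<S>" "T1 \<in> \<S>" "S \<inter> T1 = {}"
        "fibre_point (k z0) (G z0) \<notin> T0" "T0 \<union> T1 = topspace X"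
      using normal_subbase_separating_cover[OF subbase t1 binary normal assms False _ z0(2)] by blast
    show ?thesis
    proof (cases "T0 \<inter> fibre (k z0) = {}")
      case True
      then have "fibre (k z0) \<inter> S = {}" using T(3,5) unfolding fibre_def by auto
      then show ?thesis using neighbourhood_avoiding_disjoint_fibre[OF assms z0(1)] by blast
    next
      case False
      then show ?thesis
        using neighbourhood_inside_cover_member[OF T(1,2,5) z0(1) T(4)] T(3) by blast
    qed
  qed
  have "openin Z (topspace Z - {z \<in> topspace Z. fibre_point (k z) (G z) \<in> S})"
  proof (subst openin_subopen, intro ballI)
    fix z0 assume "z0 \<in> topspace Z - {z \<in> topspace Z. fibre_point (k z) (G z) \<in> S}"
    then obtain W where W: "openin Z W" "z0 \<in> W" "\<forall>z\<in>W. fibre_point (k z) (G z) \<notin> S"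
      using avoid by blast
    show "\<exists>T. openin Z T \<and> z0 \<in> T \<and> T \<subseteq> topspace Z - {z \<in> topspace Z. fibre_point (k z) (G z) \<in> S}"
      using W openin_subset[OF W(1)] by (intro exI[of _ W]) auto
  qed
  then show ?thesis unfolding closedin_def by auto
qed

lemma continuous_map_fibre_point: "continuous_map Z X (\<lambda>z. fibre_point (k z) (G z))"
proof (rule continuous_map_closed_subbase[OF subbase])
  show "fibre_point (k z) (G z) \<in> topspace X" if "z \<in> topspace Z" for z
    using fibre_point_along(1)[OF that] unfolding fibre_def by auto
qed (rule closedin_preimage_fibre_point)

end

lemma lift_extension_of_absolute_extensor:
  fixes Z :: "'z topology"
  assumes "absolute_extensor_for (superextension X) Z" "closedin Z A" "continuous_map Z Y k"
    and "continuous_map (subtopology Z A) X h" "\<forall>a\<in>A. f (h a) = k a"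
  shows "\<exists>g. continuous_map Z X g \<and> (\<forall>a\<in>A. g a = h a) \<and> (\<forall>z\<in>topspace Z. f (g z) = k z)"
proof -
  have "continuous_map (subtopology Z A) (superextension X) (principal_linked_system X \<circ> h)"
    using continuous_map_compose[OF assms(4) continuous_map_principal_linked_system[OF t1]] .
  then have "\<exists>G. continuous_map Z (superextension X) G \<and>
      (\<forall>a\<in>A. G a = (principal_linked_system X \<circ> h) a)"
    using assms(1,2) unfolding absolute_extensor_for_def by blast
  then obtain G where G: "continuous_map Z (superextension X) G"
      "\<forall>a\<in>A. G a = principal_linked_system X (h a)"
    by auto
  have "fibre_point (k a) (G a) = h a" if "a \<in> A" for a
  proof -
    have "h a \<in> topspace X"
      using continuous_map_image_subset_topspace[OF assms(4)] closedin_subset[OF assms(2)] that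
      by auto
    then show ?thesis using fibre_point_principal G(2) assms(5) that by metis
  qed
  moreover have "f (fibre_point (k z) (G z)) = k z" if "z \<in> topspace Z" for z
    using fibre_point_along(1)[OF assms(3) G(1) that] unfolding fibre_def by blast
  ultimately show ?thesis
    using continuous_map_fibre_point[OF assms(3) G(1)] by blast
qed

end

text \<open>The spaces in \<open>\<A>\<close> need not be Tychonoff, \<open>X\<close> need only be \<open>T\<^sub>1\<close> and \<open>Y\<close> Hausdorff.\<close>
theorem corollary3p2:
  fixes \<A> :: "'z topology set"
    and X :: "'a topology" and Y :: "'b topology"
    and \<S> :: "'a set set" and f :: "'a \<Rightarrow> 'b"
  assumes "\<forall>Z\<in>\<A>. tychonoff_space Z"
    and "compact_space X" and "Hausdorff_space X"
    and "closed_subbase X \<S>" and "binary_family X \<S>" and "normal_family X \<S>"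
    and "\<forall>Z\<in>\<A>. absolute_extensor_for (superextension X) Z"
    and "tychonoff_space Y"
    and "continuous_map X Y f" and "open_map X Y f" and "f ` topspace X = topspace Y"
    and "S_convex_map X \<S> Y f"
  shows "soft_map \<A> X Y f"
proof -
  interpret S_convex_open_surjection X \<S> Y f
    using assms(2-6,8-12) Hausdorff_imp_t1_space
    by unfold_locales (auto simp: tychonoff_space_def)
  show ?thesis
    unfolding soft_map_def using assms(7) lift_extension_of_absolute_extensor by blast
qed

end
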